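(* Let $\Omega\subset\mathbb{R}^3$ be a bounded convex domain and $D_1=\{(x,y,v)\in\Omega\times\Omega\times\mathbb{R}^3: |x-q_-(x,v)|\le|y-q_-(y,v)|\}$. For every non-negative measurable function $h=h(v,y,x,r)$, $$\int_{D_1}\int_{|x-q_-(x,v)|}^{|y-q_-(y,v)|}h(v,y,x,r)\,dr\,dx\,dy\,dv=\int_{\mathbb{R}^3}\int_\Omega\int_{\Omega_{v',y'}}\int_{|x'-q^1(x',v')|}^{\min\{|x'-q^2(x',v')|,\,|y'-q_+(y',v')|\}}h(v',y'+r'\hat{v'},x'+r'\hat{v'},r')\,dr'\,dx'\,dy'\,dv',$$ where $\hat{v'}=v'/|v'|$ and $\Omega_{v',y'}$ is the set of points $x'\notin\Omega$ for which there exist $0<t^1(x',v')<t^2(x',v')$ with $q^i(x',v'):=x'+t^i(x',v')\hat{v'}\in\partial\Omega$ ($i=1,2$) and $t^1(x',v')<|y'-q_+(y',v')|$.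
   Context: For $x\in\Omega$, $v\ne0$: $\tau_\mp(x,v)=\inf\{t>0: x\mp tv\notin\Omega\}$, $q_-(x,v)=x-\tau_-(x,v)v$, $q_+(x,v)=x+\tau_+(x,v)v$. *)

theory Defs
  imports "HOL-Analysis.Analysis"
begin

definition tau_minus :: "(real^3) set \<Rightarrow> real^3 \<Rightarrow> real^3 \<Rightarrow> real" where
  "tau_minus \<Omega> x v = Inf {t. 0 < t \<and> x - t *\<^sub>R v \<notin> \<Omega>}"

definition tau_plus :: "(real^3) set \<Rightarrow> real^3 \<Rightarrow> real^3 \<Rightarrow> real" where
  "tau_plus \<Omega> x v = Inf {t. 0 < t \<and> x + t *\<^sub>R v \<notin> \<Omega>}"

definition q_minus :: "(real^3) set \<Rightarrow> real^3 \<Rightarrow> real^3 \<Rightarrow> real^3" where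
  "q_minus \<Omega> x v = x - tau_minus \<Omega> x v *\<^sub>R v"

definition q_plus :: "(real^3) set \<Rightarrow> real^3 \<Rightarrow> real^3 \<Rightarrow> real^3" where
  "q_plus \<Omega> x v = x + tau_plus \<Omega> x v *\<^sub>R v"

definition vhat :: "real^3 \<Rightarrow> real^3" where
  "vhat v = (1 / norm v) *\<^sub>R v"

definition t1 :: "(real^3) set \<Rightarrow> real^3 \<Rightarrow> real^3 \<Rightarrow> real" where
  "t1 \<Omega> x v = Inf {t. 0 < t \<and> x + t *\<^sub>R vhat v \<in> frontier \<Omega>}"

definition t2 :: "(real^3) set \<Rightarrow> real^3 \<Rightarrow> real^3 \<Rightarrow> real" where
  "t2 \<Omega> x v = Sup {t. 0 < t \<and> x + t *\<^sub>R vhat v \<in> frontier \<Omega>}"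

definition q1 :: "(real^3) set \<Rightarrow> real^3 \<Rightarrow> real^3 \<Rightarrow> real^3" where
  "q1 \<Omega> x v = x + t1 \<Omega> x v *\<^sub>R vhat v"

definition q2 :: "(real^3) set \<Rightarrow> real^3 \<Rightarrow> real^3 \<Rightarrow> real^3" where
  "q2 \<Omega> x v = x + t2 \<Omega> x v *\<^sub>R vhat v"

definition Omega_vy :: "(real^3) set \<Rightarrow> real^3 \<Rightarrow> real^3 \<Rightarrow> (real^3) set" where
  "Omega_vy \<Omega> v y = {x. x \<notin> \<Omega> \<and> 0 < t1 \<Omega> x v \<and> t1 \<Omega> x v < t2 \<Omega> x v
       \<and> q1 \<Omega> x v \<in> frontier \<Omega> \<and> q2 \<Omega> x v \<in> frontier \<Omega>
       \<and> t1 \<Omega> x v < norm (y - q_plus \<Omega> y v)}"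

definition D1 :: "(real^3) set \<Rightarrow> ((real^3) \<times> (real^3) \<times> (real^3)) set" where
  "D1 \<Omega> = {(x, y, v). x \<in> \<Omega> \<and> y \<in> \<Omega> \<and>
       norm (x - q_minus \<Omega> x v) \<le> norm (y - q_minus \<Omega> y v)}"

end

theory Submission
  imports Defs
begin

text \<open>Fix a direction \<open>v \<noteq> 0\<close> and write \<open>u = v/|v|\<close>. The shear
  \<open>(y, x, r) \<mapsto> (y + r u, x + r u, r)\<close> preserves Lebesgue measure (Fubini and translation
  invariance). For \<open>x = x' + r u\<close> and \<open>y = y' + r u\<close>, the conditions
  \<open>|x - q_-(x,v)| \<le> r \<le> |y - q_-(y,v)|\<close> say, up to null sets, that \<open>x'\<close> lies outside \<open>\<Omega>\<close>
  while \<open>x' + r u \<in> \<Omega>\<close>, and that \<open>y' \<in> \<Omega>\<close> with \<open>r < |y' - q_+(y',v)|\<close>. By convexity the ray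
  \<open>x' + t u\<close> meets \<open>\<Omega>\<close> in a chord \<open>t\<^sup>1 < t < t\<^sup>2\<close>, which gives the \<open>r\<close>-range on the right. The
  exceptional points (on \<open>\<partial>\<Omega>\<close>, or on lines that only touch \<open>\<Omega>\<close>) lie on frontiers of convex sets,
  which are null, as is \<open>{v = 0}\<close>.\<close>

section \<open>Chords of a bounded open convex set\<close>

lemma open_bounded_interval_real:
  fixes L :: "real set"
  assumes "open L" "is_interval L" "bounded L" "L \<noteq> {}"
  obtains a b where "a < b" "L = {a<..<b}"
proof -
  have bdd: "bdd_below L" "bdd_above L"
    using \<open>bounded L\<close> by (simp_all add: bounded_imp_bdd_below bounded_imp_bdd_above)
  have "L = {Inf L<..<Sup L}"
  proof
    have "L \<subseteq> {Inf L..Sup L}"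
      using bdd by (auto intro: cInf_lower cSup_upper)
    then show "L \<subseteq> {Inf L<..<Sup L}"
      using interior_maximal[OF _ \<open>open L\<close>] by (metis interior_atLeastAtMost_real)
    show "{Inf L<..<Sup L} \<subseteq> L"
    proof
      fix t assume "t \<in> {Inf L<..<Sup L}"
      then obtain s\<^sub>1 s\<^sub>2 where "s\<^sub>1 \<in> L" "s\<^sub>1 < t" "s\<^sub>2 \<in> L" "t < s\<^sub>2"
        using \<open>L \<noteq> {}\<close> bdd by (auto simp: cInf_less_iff less_cSup_iff)
      then show "t \<in> L"
        using \<open>is_interval L\<close> unfolding is_interval_1 by (meson less_imp_le)
    qed
  qed
  then show thesis
    using that \<open>L \<noteq> {}\<close> by (metis greaterThanLessThan_empty_iff not_less)
qed

lemma convex_line_preimage: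
  assumes "convex \<Omega>"
  shows "convex {t. p + t *\<^sub>R u \<in> \<Omega>}"
proof (rule convexI)
  fix s t a b :: real
  assume "s \<in> {t. p + t *\<^sub>R u \<in> \<Omega>}" "t \<in> {t. p + t *\<^sub>R u \<in> \<Omega>}" "0 \<le> a" "0 \<le> b" "a + b = 1"
  moreover have "p + (a * s + b * t) *\<^sub>R u = a *\<^sub>R (p + s *\<^sub>R u) + b *\<^sub>R (p + t *\<^sub>R u)"
    using \<open>a + b = 1\<close> by (simp add: algebra_simps flip: scaleR_add_left)
  ultimately show "a *\<^sub>R s + b *\<^sub>R t \<in> {t. p + t *\<^sub>R u \<in> \<Omega>}"
    using assms by (simp add: convexD)
qed

lemma bounded_line_preimage:
  fixes \<Omega> :: "'a::real_normed_vector set"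
  assumes "bounded \<Omega>" "u \<noteq> 0"
  shows "bounded {t. p + t *\<^sub>R u \<in> \<Omega>}"
proof -
  obtain B where B: "\<And>z. z \<in> \<Omega> \<Longrightarrow> norm z \<le> B"
    using \<open>bounded \<Omega>\<close> bounded_iff by blast
  have "\<bar>t\<bar> * norm u \<le> B + norm p" if "p + t *\<^sub>R u \<in> \<Omega>" for t
    using norm_triangle_ineq4[of "p + t *\<^sub>R u" p] B[OF that] by simp
  then have "{t. p + t *\<^sub>R u \<in> \<Omega>} \<subseteq> cball 0 ((B + norm p) / norm u)"
    using \<open>u \<noteq> 0\<close> by (auto simp: field_simps)
  then show ?thesis
    using bounded_cball bounded_subset by blast
qed

lemma convex_line_section:
  fixes \<Omega> :: "'a::euclidean_space set"
  assumes "open \<Omega>" "convex \<Omega>" "bounded \<Omega>" "u \<noteq> 0" "p + t\<^sub>0 *\<^sub>R u \<in> \<Omega>"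
  obtains \<alpha> \<beta> where "\<alpha> < \<beta>" "\<And>t. p + t *\<^sub>R u \<in> \<Omega> \<longleftrightarrow> \<alpha> < t \<and> t < \<beta>"
    "\<And>t. p + t *\<^sub>R u \<in> closure \<Omega> \<longleftrightarrow> \<alpha> \<le> t \<and> t \<le> \<beta>"
proof -
  define f where "f t = p + t *\<^sub>R u" for t
  have f_cont: "continuous_on A f" for A
    unfolding f_def by (intro continuous_intros)
  have "open (f -` \<Omega>)"
    using \<open>open \<Omega>\<close> f_cont by (simp add: open_vimage)
  moreover have "convex (f -` \<Omega>)" "bounded (f -` \<Omega>)"
    using convex_line_preimage[OF \<open>convex \<Omega>\<close>] bounded_line_preimage[OF \<open>bounded \<Omega>\<close> \<open>u \<noteq> 0\<close>]
    by (simp_all add: f_def vimage_def)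
  moreover have "f -` \<Omega> \<noteq> {}"
    using assms(5) by (auto simp: f_def)
  ultimately obtain \<alpha> \<beta> where "\<alpha> < \<beta>" and L: "f -` \<Omega> = {\<alpha><..<\<beta>}"
    using open_bounded_interval_real is_interval_convex_1 by blast
  then have mem: "f t \<in> \<Omega> \<longleftrightarrow> \<alpha> < t \<and> t < \<beta>" for t
    by (auto simp: set_eq_iff)
  have "closure \<Omega> \<inter> range f = closure (\<Omega> \<inter> range f)"
  proof (rule convex_affine_closure_Int[symmetric])
    have "range f = affine hull {p, p + u}"
      by (simp add: affine_hull_2_alt f_def)
    then show "affine (range f)"
      by simp
    show "rel_interior \<Omega> \<inter> range f \<noteq> {}"
      using \<open>open \<Omega>\<close> assms(5) by (auto simp: rel_interior_open f_def)
  qed fact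
  also have "\<Omega> \<inter> range f = f ` {\<alpha><..<\<beta>}"
    by (simp add: image_vimage_eq flip: L)
  also have "closure (f ` {\<alpha><..<\<beta>}) = f ` {\<alpha>..\<beta>}"
  proof
    show "closure (f ` {\<alpha><..<\<beta>}) \<subseteq> f ` {\<alpha>..\<beta>}"
      by (intro closure_minimal image_mono compact_imp_closed compact_continuous_image f_cont)
         auto
    show "f ` {\<alpha>..\<beta>} \<subseteq> closure (f ` {\<alpha><..<\<beta>})"
      using image_closure_subset[OF f_cont closed_closure closure_subset, of "{\<alpha><..<\<beta>}"]
        \<open>\<alpha> < \<beta>\<close> by simp
  qed
  finally have "f t \<in> closure \<Omega> \<longleftrightarrow> f t \<in> f ` {\<alpha>..\<beta>}" for t
    by blast
  moreover have "inj f"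
    using \<open>u \<noteq> 0\<close> by (simp add: f_def inj_def)
  ultimately have "f t \<in> closure \<Omega> \<longleftrightarrow> \<alpha> \<le> t \<and> t \<le> \<beta>" for t
    by (simp add: inj_image_mem_iff)
  then show thesis
    using that[OF \<open>\<alpha> < \<beta>\<close>] mem by (simp add: f_def)
qed

lemma convex_exit_time:
  fixes \<Omega> :: "'a::euclidean_space set"
  assumes "open \<Omega>" "convex \<Omega>" "bounded \<Omega>" "z \<in> \<Omega>" "w \<noteq> 0"
  defines "\<tau> \<equiv> Inf {t. 0 < t \<and> z + t *\<^sub>R w \<notin> \<Omega>}"
  shows "0 < \<tau>" "\<And>t. 0 < t \<Longrightarrow> z + t *\<^sub>R w \<in> \<Omega> \<longleftrightarrow> t < \<tau>" "z + \<tau> *\<^sub>R w \<in> frontier \<Omega>"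
proof -
  obtain \<alpha> \<beta> where "\<alpha> < \<beta>" and mem: "\<And>t. z + t *\<^sub>R w \<in> \<Omega> \<longleftrightarrow> \<alpha> < t \<and> t < \<beta>"
    and cl: "\<And>t. z + t *\<^sub>R w \<in> closure \<Omega> \<longleftrightarrow> \<alpha> \<le> t \<and> t \<le> \<beta>"
    using convex_line_section[OF assms(1-3,5), of z 0] \<open>z \<in> \<Omega>\<close> by auto
  have "\<alpha> < 0" "0 < \<beta>"
    using mem[of 0] \<open>z \<in> \<Omega>\<close> by auto
  then have "{t. 0 < t \<and> z + t *\<^sub>R w \<notin> \<Omega>} = {\<beta>..}"
    by (auto simp: mem)
  then have "\<tau> = \<beta>"
    by (simp add: \<tau>_def)
  then show "0 < \<tau>" "\<And>t. 0 < t \<Longrightarrow> z + t *\<^sub>R w \<in> \<Omega> \<longleftrightarrow> t < \<tau>"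
    using \<open>\<alpha> < 0\<close> \<open>0 < \<beta>\<close> mem by auto
  show "z + \<tau> *\<^sub>R w \<in> frontier \<Omega>"
    using \<open>\<tau> = \<beta>\<close> cl[of \<beta>] mem[of \<beta>] \<open>\<alpha> < \<beta>\<close> \<open>open \<Omega>\<close>
    by (simp add: frontier_def interior_open)
qed

lemma norm_vhat: "v \<noteq> 0 \<Longrightarrow> norm (vhat v) = 1"
  by (simp add: vhat_def)

lemma vhat_uminus: "vhat (- v) = - vhat v"
  by (simp add: vhat_def)

lemma q_minus_eq_q_plus_uminus: "q_minus \<Omega> z v = q_plus \<Omega> z (- v)"
  by (simp add: q_minus_def q_plus_def tau_minus_def tau_plus_def)

lemma q_plus_exit:
  fixes \<Omega> :: "(real^3) set"
  assumes "open \<Omega>" "convex \<Omega>" "bounded \<Omega>" "z \<in> \<Omega>" "v \<noteq> 0"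
  shows "0 < norm (z - q_plus \<Omega> z v)"
    "\<And>s. 0 < s \<Longrightarrow> z + s *\<^sub>R vhat v \<in> \<Omega> \<longleftrightarrow> s < norm (z - q_plus \<Omega> z v)"
    "z + norm (z - q_plus \<Omega> z v) *\<^sub>R vhat v \<in> frontier \<Omega>"
proof -
  note exit = convex_exit_time[OF assms, folded tau_plus_def]
  have "norm v > 0"
    using \<open>v \<noteq> 0\<close> by simp
  have dist: "norm (z - q_plus \<Omega> z v) = tau_plus \<Omega> z v * norm v"
    using exit(1) by (simp add: q_plus_def)
  have ray: "z + s *\<^sub>R vhat v = z + (s / norm v) *\<^sub>R v" for s
    by (simp add: vhat_def)
  show "0 < norm (z - q_plus \<Omega> z v)"
    using dist exit(1) \<open>norm v > 0\<close> by simp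
  show "z + s *\<^sub>R vhat v \<in> \<Omega> \<longleftrightarrow> s < norm (z - q_plus \<Omega> z v)" if "0 < s" for s
    using exit(2)[of "s / norm v"] that \<open>norm v > 0\<close> by (simp add: ray dist divide_less_eq)
  show "z + norm (z - q_plus \<Omega> z v) *\<^sub>R vhat v \<in> frontier \<Omega>"
    using exit(3) \<open>norm v > 0\<close> by (simp add: ray dist)
qed

lemma q_minus_exit:
  fixes \<Omega> :: "(real^3) set"
  assumes "open \<Omega>" "convex \<Omega>" "bounded \<Omega>" "z \<in> \<Omega>" "v \<noteq> 0"
  shows "0 < norm (z - q_minus \<Omega> z v)"
    "\<And>s. 0 < s \<Longrightarrow> z - s *\<^sub>R vhat v \<in> \<Omega> \<longleftrightarrow> s < norm (z - q_minus \<Omega> z v)"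
    "z - norm (z - q_minus \<Omega> z v) *\<^sub>R vhat v \<in> frontier \<Omega>"
  using q_plus_exit[OF assms(1-4), of "- v"] \<open>v \<noteq> 0\<close>
  by (simp_all add: q_minus_eq_q_plus_uminus vhat_uminus)

text \<open>A point \<open>x \<notin> closure \<Omega>\<close> whose line in direction \<open>u\<close> touches \<open>closure \<Omega>\<close> but misses
  \<open>\<Omega>\<close> lies on the frontier of this set; for such \<open>x\<close> the chord description below fails.\<close>

definition cylinder :: "'a::real_vector set \<Rightarrow> 'a \<Rightarrow> 'a set" where
  "cylinder \<Omega> u = {p. \<exists>s. p + s *\<^sub>R u \<in> \<Omega>}"

lemma convex_cylinder:
  assumes "convex \<Omega>"
  shows "convex (cylinder \<Omega> u)"
proof (rule convexI)
  fix x y and a b :: real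
  assume "x \<in> cylinder \<Omega> u" "y \<in> cylinder \<Omega> u" "0 \<le> a" "0 \<le> b" "a + b = 1"
  then obtain s\<^sub>x s\<^sub>y where "x + s\<^sub>x *\<^sub>R u \<in> \<Omega>" "y + s\<^sub>y *\<^sub>R u \<in> \<Omega>"
    by (auto simp: cylinder_def)
  then have "a *\<^sub>R (x + s\<^sub>x *\<^sub>R u) + b *\<^sub>R (y + s\<^sub>y *\<^sub>R u) \<in> \<Omega>"
    using assms \<open>0 \<le> a\<close> \<open>0 \<le> b\<close> \<open>a + b = 1\<close> by (simp add: convexD)
  then have "(a *\<^sub>R x + b *\<^sub>R y) + (a * s\<^sub>x + b * s\<^sub>y) *\<^sub>R u \<in> \<Omega>"
    by (simp add: algebra_simps)
  then show "a *\<^sub>R x + b *\<^sub>R y \<in> cylinder \<Omega> u"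
    unfolding cylinder_def by blast
qed

lemma not_in_Omega_vy_outside_cylinder:
  fixes \<Omega> :: "(real^3) set"
  assumes "x \<notin> closure (cylinder \<Omega> (vhat v))"
  shows "x \<notin> Omega_vy \<Omega> v y"
proof
  let ?C = "cylinder \<Omega> (vhat v)" and ?t = "t1 \<Omega> x v"
  assume "x \<in> Omega_vy \<Omega> v y"
  then have "x + ?t *\<^sub>R vhat v \<in> closure \<Omega>"
    by (simp add: Omega_vy_def q1_def frontier_def)
  moreover have "(+) (- ?t *\<^sub>R vhat v) ` \<Omega> \<subseteq> ?C"
    by (auto simp: cylinder_def intro: exI[of _ ?t])
  then have "(+) (- ?t *\<^sub>R vhat v) ` closure \<Omega> \<subseteq> closure ?C"
    by (metis closure_mono closure_translation)
  ultimately have "x \<in> closure ?C"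
    by (force simp: image_iff)
  then show False
    using assms by blast
qed

lemma ray_from_exterior_cases:
  fixes \<Omega> :: "(real^3) set"
  assumes "open \<Omega>" "convex \<Omega>" "bounded \<Omega>" "v \<noteq> 0"
    and "x \<notin> closure \<Omega>" "x \<notin> frontier (cylinder \<Omega> (vhat v))"
  obtains (misses) "\<And>t. 0 < t \<Longrightarrow> x + t *\<^sub>R vhat v \<notin> \<Omega>" "\<And>y. x \<notin> Omega_vy \<Omega> v y"
  | (chord) \<alpha> \<beta> where "0 < \<alpha>" "\<alpha> < \<beta>" "\<And>t. x + t *\<^sub>R vhat v \<in> \<Omega> \<longleftrightarrow> \<alpha> < t \<and> t < \<beta>"
      "norm (x - q1 \<Omega> x v) = \<alpha>" "norm (x - q2 \<Omega> x v) = \<beta>"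
      "\<And>y. x \<in> Omega_vy \<Omega> v y \<longleftrightarrow> \<alpha> < norm (y - q_plus \<Omega> y v)"
proof (cases "\<exists>t. x + t *\<^sub>R vhat v \<in> \<Omega>")
  case True
  then obtain \<alpha> \<beta> where "\<alpha> < \<beta>" and mem: "\<And>t. x + t *\<^sub>R vhat v \<in> \<Omega> \<longleftrightarrow> \<alpha> < t \<and> t < \<beta>"
    and cl: "\<And>t. x + t *\<^sub>R vhat v \<in> closure \<Omega> \<longleftrightarrow> \<alpha> \<le> t \<and> t \<le> \<beta>"
    using convex_line_section[OF assms(1-3)] norm_vhat[OF \<open>v \<noteq> 0\<close>] by (metis norm_zero zero_neq_one)
  have fr: "x + t *\<^sub>R vhat v \<in> frontier \<Omega> \<longleftrightarrow> t = \<alpha> \<or> t = \<beta>" for t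
    using cl[of t] mem[of t] \<open>\<alpha> < \<beta>\<close> \<open>open \<Omega>\<close> by (auto simp: frontier_def interior_open)
  have "0 < \<alpha> \<or> \<beta> < 0"
    using cl[of 0] \<open>x \<notin> closure \<Omega>\<close> by auto
  then show thesis
  proof
    assume "0 < \<alpha>"
    then have hits: "{t. 0 < t \<and> x + t *\<^sub>R vhat v \<in> frontier \<Omega>} = {\<alpha>, \<beta>}"
      using \<open>\<alpha> < \<beta>\<close> by (auto simp: fr)
    have "t1 \<Omega> x v = \<alpha>"
      unfolding t1_def hits by (rule cInf_eq_minimum) (use \<open>\<alpha> < \<beta>\<close> in auto)
    moreover have "t2 \<Omega> x v = \<beta>"
      unfolding t2_def hits by (rule cSup_eq_maximum) (use \<open>\<alpha> < \<beta>\<close> in auto)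
    moreover have "x \<notin> \<Omega>"
      using \<open>x \<notin> closure \<Omega>\<close> closure_subset by blast
    ultimately show thesis
      using chord[OF \<open>0 < \<alpha>\<close> \<open>\<alpha> < \<beta>\<close> mem] \<open>0 < \<alpha>\<close> \<open>\<alpha> < \<beta>\<close> \<open>v \<noteq> 0\<close>
      by (simp add: Omega_vy_def q1_def q2_def fr norm_vhat)
  next
    assume "\<beta> < 0"
    \<comment> \<open>The ray meets no boundary point, and on the reals \<open>Inf {} = - Sup {}\<close>,
        so \<open>0 < t1 < t2\<close> fails.\<close>
    then have no_hits: "{t. 0 < t \<and> x + t *\<^sub>R vhat v \<in> frontier \<Omega>} = {}"
      using \<open>\<alpha> < \<beta>\<close> by (auto simp: fr)
    have "\<not> (0 < t1 \<Omega> x v \<and> t1 \<Omega> x v < t2 \<Omega> x v)"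
      unfolding t1_def t2_def no_hits Inf_real_def by simp
    then show thesis
      using misses mem \<open>\<beta> < 0\<close> by (auto simp: Omega_vy_def)
  qed
next
  case False
  then have "x \<notin> cylinder \<Omega> (vhat v)"
    by (simp add: cylinder_def)
  then have "x \<notin> closure (cylinder \<Omega> (vhat v))"
    using assms(6) interior_subset by (auto simp: frontier_def)
  then show thesis
    using misses False not_in_Omega_vy_outside_cylinder by blast
qed

section \<open>Null frontiers and shears of Lebesgue measure\<close>

lemma null_sets_lborel_frontier_convex:
  fixes S :: "'a::euclidean_space set"
  assumes "convex S"
  shows "frontier S \<in> null_sets lborel"
  using negligible_convex_frontier[OF assms] negligible_iff_null_sets null_sets_completion_iff
  by (metis borel_closed frontier_closed sets_lborel)

lemma nn_integral_lborel_translate: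
  fixes g :: "'a::euclidean_space \<Rightarrow> ennreal"
  assumes "g \<in> borel_measurable borel"
  shows "(\<integral>\<^sup>+x. g x \<partial>lborel) = (\<integral>\<^sup>+x. g (x + c) \<partial>lborel)"
proof -
  have "(\<integral>\<^sup>+x. g x \<partial>lborel) = (\<integral>\<^sup>+x. g x \<partial>distr lborel borel ((+) c))"
    by (simp add: lborel_distr_plus)
  also have "\<dots> = (\<integral>\<^sup>+x. g (c + x) \<partial>lborel)"
    using assms by (intro nn_integral_distr) auto
  finally show ?thesis
    by (simp add: add.commute)
qed

lemma nn_integral_lborel_shear:
  fixes F :: "'a::euclidean_space \<times> 'a \<times> real \<Rightarrow> ennreal"
  assumes "F \<in> borel_measurable borel"
  shows "(\<integral>\<^sup>+y. \<integral>\<^sup>+x. \<integral>\<^sup>+r. F (y, x, r) \<partial>lborel \<partial>lborel \<partial>lborel)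
       = (\<integral>\<^sup>+y. \<integral>\<^sup>+x. \<integral>\<^sup>+r. F (y + r *\<^sub>R u, x + r *\<^sub>R u, r) \<partial>lborel \<partial>lborel \<partial>lborel)"
proof -
  have [measurable]: "F \<in> borel_measurable (borel \<Otimes>\<^sub>M borel \<Otimes>\<^sub>M borel)"
    using assms by (simp add: borel_prod)
  have "(\<integral>\<^sup>+y. \<integral>\<^sup>+x. \<integral>\<^sup>+r. F (y, x, r) \<partial>lborel \<partial>lborel \<partial>lborel)
      = (\<integral>\<^sup>+y. \<integral>\<^sup>+r. \<integral>\<^sup>+x. F (y, x, r) \<partial>lborel \<partial>lborel \<partial>lborel)"
    by (intro nn_integral_cong lborel_pair.Fubini'[symmetric]) simp
  also have "\<dots> = (\<integral>\<^sup>+r. \<integral>\<^sup>+y. \<integral>\<^sup>+x. F (y, x, r) \<partial>lborel \<partial>lborel \<partial>lborel)"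
    by (intro lborel_pair.Fubini') simp
  also have "\<dots> = (\<integral>\<^sup>+r. \<integral>\<^sup>+y. \<integral>\<^sup>+x. F (y + r *\<^sub>R u, x + r *\<^sub>R u, r) \<partial>lborel \<partial>lborel \<partial>lborel)"
  proof (rule nn_integral_cong)
    fix r :: real
    have "(\<integral>\<^sup>+y. \<integral>\<^sup>+x. F (y, x, r) \<partial>lborel \<partial>lborel)
        = (\<integral>\<^sup>+y. \<integral>\<^sup>+x. F (y, x + r *\<^sub>R u, r) \<partial>lborel \<partial>lborel)"
      by (intro nn_integral_cong nn_integral_lborel_translate) simp
    also have "\<dots> = (\<integral>\<^sup>+y. \<integral>\<^sup>+x. F (y + r *\<^sub>R u, x + r *\<^sub>R u, r) \<partial>lborel \<partial>lborel)"
      by (rule nn_integral_lborel_translate) simp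
    finally show "(\<integral>\<^sup>+y. \<integral>\<^sup>+x. F (y, x, r) \<partial>lborel \<partial>lborel)
        = (\<integral>\<^sup>+y. \<integral>\<^sup>+x. F (y + r *\<^sub>R u, x + r *\<^sub>R u, r) \<partial>lborel \<partial>lborel)" .
  qed
  also have "\<dots> = (\<integral>\<^sup>+y. \<integral>\<^sup>+r. \<integral>\<^sup>+x. F (y + r *\<^sub>R u, x + r *\<^sub>R u, r) \<partial>lborel \<partial>lborel \<partial>lborel)"
    by (intro lborel_pair.Fubini'[symmetric]) simp
  also have "\<dots> = (\<integral>\<^sup>+y. \<integral>\<^sup>+x. \<integral>\<^sup>+r. F (y + r *\<^sub>R u, x + r *\<^sub>R u, r) \<partial>lborel \<partial>lborel \<partial>lborel)"
    by (intro nn_integral_cong lborel_pair.Fubini') simp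
  finally show ?thesis .
qed

lemma nn_integral_lborel_indicator_Ioo_Icc:
  fixes a b :: real
  shows "(\<integral>\<^sup>+r. indicator {a<..<b} r * f r \<partial>lborel) = (\<integral>\<^sup>+r. indicator {a..b} r * f r \<partial>lborel)"
proof (rule nn_integral_cong_AE)
  have "AE r in lborel. r \<notin> {a, b}"
    by (rule AE_not_in) (simp add: finite_imp_null_set_lborel)
  then show "AE r in lborel. indicator {a<..<b} r * f r = indicator {a..b} r * f r"
    by eventually_elim (auto simp: indicator_def)
qed

section \<open>The integral over \<open>D1\<close> in a fixed direction\<close>

lemma borel_measurable_backward_distance:
  fixes \<Omega> :: "(real^3) set"
  assumes "open \<Omega>" "convex \<Omega>" "bounded \<Omega>" "v \<noteq> 0"
  shows "(\<lambda>z. if z \<in> \<Omega> then norm (z - q_minus \<Omega> z v) else 0) \<in> borel_measurable borel"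
proof (subst borel_measurable_iff_greater, intro allI)
  fix s :: real
  let ?S = "{z \<in> space borel. s < (if z \<in> \<Omega> then norm (z - q_minus \<Omega> z v) else 0)}"
  show "?S \<in> sets borel"
  proof (cases "s < 0")
    case True
    then have "?S = UNIV"
      by (auto intro: less_le_trans[OF _ norm_ge_zero])
    then show ?thesis by simp
  next
    case False
    note exit = q_minus_exit[OF assms(1-3) _ assms(4)]
    have "s < norm (z - q_minus \<Omega> z v) \<longleftrightarrow> z - s *\<^sub>R vhat v \<in> \<Omega>" if "z \<in> \<Omega>" for z
      using exit[OF that] False that by (cases "s = 0") auto
    then have "?S = \<Omega> \<inter> (+) (s *\<^sub>R vhat v) ` \<Omega>"
      using False by (auto simp: image_iff algebra_simps intro!: bexI[of _ "_ - s *\<^sub>R vhat v"])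
    moreover have "open (\<Omega> \<inter> (+) (s *\<^sub>R vhat v) ` \<Omega>)"
      using \<open>open \<Omega>\<close> by (intro open_Int open_translation)
    ultimately show ?thesis
      by (simp add: borel_open)
  qed
qed

definition D1_section :: "(real^3) set \<Rightarrow> real^3 \<Rightarrow> ((real^3) \<times> (real^3) \<times> real) set" where
  "D1_section \<Omega> v = {(y, x, r). (x, y, v) \<in> D1 \<Omega> \<and>
      norm (x - q_minus \<Omega> x v) \<le> r \<and> r \<le> norm (y - q_minus \<Omega> y v)}"

lemma sets_D1_section:
  fixes \<Omega> :: "(real^3) set"
  assumes "open \<Omega>" "convex \<Omega>" "bounded \<Omega>" "v \<noteq> 0"
  shows "D1_section \<Omega> v \<in> sets borel"
proof -
  define a where "a z = (if z \<in> \<Omega> then norm (z - q_minus \<Omega> z v) else 0)" for z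
  have [measurable]: "a \<in> borel_measurable borel" "\<Omega> \<in> sets borel"
    using borel_measurable_backward_distance[OF assms] \<open>open \<Omega>\<close>
    by (simp_all add: a_def[abs_def] borel_open)
  have "D1_section \<Omega> v = {p \<in> space (borel \<Otimes>\<^sub>M borel \<Otimes>\<^sub>M borel).
      fst p \<in> \<Omega> \<and> fst (snd p) \<in> \<Omega> \<and> a (fst (snd p)) \<le> snd (snd p) \<and> snd (snd p) \<le> a (fst p)}"
    by (auto simp: D1_section_def D1_def a_def space_pair_measure)
  also have "\<dots> \<in> sets (borel \<Otimes>\<^sub>M borel \<Otimes>\<^sub>M borel)"
    by measurable
  finally show ?thesis
    by (simp only: borel_prod)
qed

lemma shifted_D1_section_imp_closure:
  fixes \<Omega> :: "(real^3) set"
  assumes "open \<Omega>" "convex \<Omega>" "bounded \<Omega>" "v \<noteq> 0"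
    and "(y + r *\<^sub>R vhat v, x + r *\<^sub>R vhat v, r) \<in> D1_section \<Omega> v"
  shows "y \<in> closure \<Omega>"
proof -
  let ?X = "x + r *\<^sub>R vhat v" and ?Y = "y + r *\<^sub>R vhat v"
  have "?X \<in> \<Omega>" "?Y \<in> \<Omega>" and r: "norm (?X - q_minus \<Omega> ?X v) \<le> r" "r \<le> norm (?Y - q_minus \<Omega> ?Y v)"
    using assms(5) by (auto simp: D1_section_def D1_def)
  note exit_X = q_minus_exit[OF assms(1-3) \<open>?X \<in> \<Omega>\<close> \<open>v \<noteq> 0\<close>]
  note exit_Y = q_minus_exit[OF assms(1-3) \<open>?Y \<in> \<Omega>\<close> \<open>v \<noteq> 0\<close>]
  have "0 < r"
    using exit_X(1) r(1) by linarith
  show ?thesis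
  proof (cases "r = norm (?Y - q_minus \<Omega> ?Y v)")
    case True
    then have "y \<in> frontier \<Omega>"
      using exit_Y(3) by simp
    then show ?thesis
      by (simp add: frontier_def)
  next
    case False
    then have "y \<in> \<Omega>"
      using exit_Y(2)[OF \<open>0 < r\<close>] r(2) by simp
    then show ?thesis
      using closure_subset by blast
  qed
qed

lemma shifted_D1_section_iff:
  fixes \<Omega> :: "(real^3) set"
  assumes "open \<Omega>" "convex \<Omega>" "bounded \<Omega>" "v \<noteq> 0" "y \<in> \<Omega>"
  shows "(y + r *\<^sub>R vhat v, x + r *\<^sub>R vhat v, r) \<in> D1_section \<Omega> v \<longleftrightarrow>
    0 < r \<and> x \<notin> \<Omega> \<and> x + r *\<^sub>R vhat v \<in> \<Omega> \<and> r < norm (y - q_plus \<Omega> y v)"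
proof -
  let ?X = "x + r *\<^sub>R vhat v" and ?Y = "y + r *\<^sub>R vhat v"
  note exit_y = q_plus_exit[OF assms(1-3,5,4)]
  have "norm (?X - q_minus \<Omega> ?X v) \<le> r \<longleftrightarrow> x \<notin> \<Omega>" "r < norm (?Y - q_minus \<Omega> ?Y v)"
    if "0 < r" "?X \<in> \<Omega>" "?Y \<in> \<Omega>"
    using q_minus_exit(2)[OF assms(1-3) that(2) \<open>v \<noteq> 0\<close> \<open>0 < r\<close>]
      q_minus_exit(2)[OF assms(1-3) that(3) \<open>v \<noteq> 0\<close> \<open>0 < r\<close>] \<open>y \<in> \<Omega>\<close>
    by auto
  moreover have "0 < r" if "?X \<in> \<Omega>" "norm (?X - q_minus \<Omega> ?X v) \<le> r"
    using q_minus_exit(1)[OF assms(1-3) that(1) \<open>v \<noteq> 0\<close>] that(2) by linarith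
  ultimately show ?thesis
    using exit_y(2)[of r] by (auto simp: D1_section_def D1_def)
qed

lemma nn_integral_shifted_D1_section:
  fixes \<Omega> :: "(real^3) set" and h :: "(real^3) \<times> (real^3) \<times> (real^3) \<times> real \<Rightarrow> ennreal"
  assumes "open \<Omega>" "convex \<Omega>" "bounded \<Omega>" "v \<noteq> 0"
    and "y \<notin> frontier \<Omega>" "x \<notin> frontier \<Omega>" "x \<notin> frontier (cylinder \<Omega> (vhat v))"
  defines "H \<equiv> \<lambda>r. h (v, y + r *\<^sub>R vhat v, x + r *\<^sub>R vhat v, r)"
  shows "(\<integral>\<^sup>+r. indicator (D1_section \<Omega> v) (y + r *\<^sub>R vhat v, x + r *\<^sub>R vhat v, r) * H r \<partial>lborel)
    = indicator \<Omega> y * (indicator (Omega_vy \<Omega> v y) x *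
        (\<integral>\<^sup>+r. indicator {norm (x - q1 \<Omega> x v) ..
            min (norm (x - q2 \<Omega> x v)) (norm (y - q_plus \<Omega> y v))} r * H r \<partial>lborel))"
proof -
  let ?in_section = "\<lambda>r. (y + r *\<^sub>R vhat v, x + r *\<^sub>R vhat v, r) \<in> D1_section \<Omega> v"
  have outside_closure: "z \<notin> \<Omega> \<Longrightarrow> z \<notin> frontier \<Omega> \<Longrightarrow> z \<notin> closure \<Omega>" for z
    using \<open>open \<Omega>\<close> by (auto simp: frontier_def interior_open)
  consider "y \<notin> closure \<Omega>" | "y \<in> \<Omega>" "x \<in> \<Omega>" | "y \<in> \<Omega>" "x \<notin> closure \<Omega>"
    using outside_closure assms(5,6) by blast
  then show ?thesis
  proof cases
    case 1
    then have "\<not> ?in_section r" for r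
      using shifted_D1_section_imp_closure[OF assms(1-4)] by blast
    then show ?thesis
      using 1 closure_subset by (auto simp: indicator_def)
  next
    case 2
    then have "\<not> ?in_section r" for r
      using shifted_D1_section_iff[OF assms(1-4)] by blast
    moreover have "x \<notin> Omega_vy \<Omega> v y"
      using 2 by (simp add: Omega_vy_def)
    ultimately show ?thesis
      by (simp add: indicator_def)
  next
    case 3
    note section_iff = shifted_D1_section_iff[OF assms(1-4) \<open>y \<in> \<Omega>\<close>]
    from \<open>x \<notin> closure \<Omega>\<close> have "x \<notin> \<Omega>"
      using closure_subset by blast
    show ?thesis
    proof (cases rule: ray_from_exterior_cases[OF assms(1-4) \<open>x \<notin> closure \<Omega>\<close> assms(7), case_names misses chord])
      case misses
      then have "\<not> ?in_section r" for r
        by (auto simp: section_iff)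
      with misses show ?thesis
        by (simp add: indicator_def)
    next
      case (chord \<alpha> \<beta>)
      let ?b = "norm (y - q_plus \<Omega> y v)"
      have "?in_section r \<longleftrightarrow> r \<in> {\<alpha><..<min \<beta> ?b}" for r
        using chord(1) chord(3)[of r] \<open>x \<notin> \<Omega>\<close> by (auto simp: section_iff)
      then have section_integral:
        "(\<integral>\<^sup>+r. indicator (D1_section \<Omega> v) (y + r *\<^sub>R vhat v, x + r *\<^sub>R vhat v, r) * H r \<partial>lborel)
          = (\<integral>\<^sup>+r. indicator {\<alpha><..<min \<beta> ?b} r * H r \<partial>lborel)"
        by (intro nn_integral_cong) (simp add: indicator_def)
      show ?thesis
      proof (cases "\<alpha> < ?b")
        case True
        then show ?thesis
          using chord(4-6) \<open>y \<in> \<Omega>\<close>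
          by (simp add: section_integral nn_integral_lborel_indicator_Ioo_Icc)
      next
        case False
        then show ?thesis
          using chord(6) by (simp add: section_integral)
      qed
    qed
  qed
qed

lemma nn_integral_D1_direction:
  fixes \<Omega> :: "(real^3) set" and h :: "(real^3) \<times> (real^3) \<times> (real^3) \<times> real \<Rightarrow> ennreal"
  assumes "open \<Omega>" "convex \<Omega>" "bounded \<Omega>" "h \<in> borel_measurable borel" "v \<noteq> 0"
  shows "(\<integral>\<^sup>+ y. (\<integral>\<^sup>+ x. indicator (D1 \<Omega>) (x, y, v) *
            (\<integral>\<^sup>+ r. indicator {norm (x - q_minus \<Omega> x v) .. norm (y - q_minus \<Omega> y v)} r *
               h (v, y, x, r) \<partial>lborel) \<partial>lborel) \<partial>lborel)
       = (\<integral>\<^sup>+ y'. indicator \<Omega> y' * (\<integral>\<^sup>+ x'. indicator (Omega_vy \<Omega> v y') x' *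
            (\<integral>\<^sup>+ r'. indicator {norm (x' - q1 \<Omega> x' v) ..
                        min (norm (x' - q2 \<Omega> x' v)) (norm (y' - q_plus \<Omega> y' v))} r' *
               h (v, y' + r' *\<^sub>R vhat v, x' + r' *\<^sub>R vhat v, r') \<partial>lborel)
            \<partial>lborel) \<partial>lborel)" (is "?L = (\<integral>\<^sup>+ y. indicator \<Omega> y * (\<integral>\<^sup>+ x. ?chord y x \<partial>lborel) \<partial>lborel)")
proof -
  define F where "F = (\<lambda>(y, x, r). indicator (D1_section \<Omega> v) (y, x, r) * h (v, y, x, r))"
  have [measurable]: "h \<in> borel_measurable (borel \<Otimes>\<^sub>M borel \<Otimes>\<^sub>M borel \<Otimes>\<^sub>M borel)"
    "D1_section \<Omega> v \<in> sets (borel \<Otimes>\<^sub>M borel \<Otimes>\<^sub>M borel)"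
    using assms(4) sets_D1_section[OF assms(1-3,5)] by (simp_all only: borel_prod)
  have "F \<in> borel_measurable (borel \<Otimes>\<^sub>M borel \<Otimes>\<^sub>M borel)"
    unfolding F_def by measurable
  then have F_measurable: "F \<in> borel_measurable borel"
    by (simp only: borel_prod)
  have "indicator (D1 \<Omega>) (x, y, v) *
      (\<integral>\<^sup>+ r. indicator {norm (x - q_minus \<Omega> x v) .. norm (y - q_minus \<Omega> y v)} r * h (v, y, x, r) \<partial>lborel)
      = (\<integral>\<^sup>+ r. F (y, x, r) \<partial>lborel)" for x y
    by (subst nn_integral_cmult[symmetric])
       (auto intro!: nn_integral_cong simp: F_def D1_section_def indicator_def)
  then have "?L = (\<integral>\<^sup>+ y. \<integral>\<^sup>+ x. \<integral>\<^sup>+ r. F (y, x, r) \<partial>lborel \<partial>lborel \<partial>lborel)"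
    by simp
  also have "\<dots> = (\<integral>\<^sup>+ y. \<integral>\<^sup>+ x. \<integral>\<^sup>+ r. F (y + r *\<^sub>R vhat v, x + r *\<^sub>R vhat v, r) \<partial>lborel \<partial>lborel \<partial>lborel)"
    by (rule nn_integral_lborel_shear[OF F_measurable])
  also have "\<dots> = (\<integral>\<^sup>+ y. indicator \<Omega> y * (\<integral>\<^sup>+ x. ?chord y x \<partial>lborel) \<partial>lborel)"
  proof (rule nn_integral_cong_AE)
    note null_frontier = null_sets_lborel_frontier_convex[OF \<open>convex \<Omega>\<close>]
      null_sets_lborel_frontier_convex[OF convex_cylinder[OF \<open>convex \<Omega>\<close>, of "vhat v"]]
    show "AE y in lborel. (\<integral>\<^sup>+ x. \<integral>\<^sup>+ r. F (y + r *\<^sub>R vhat v, x + r *\<^sub>R vhat v, r) \<partial>lborel \<partial>lborel)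
      = indicator \<Omega> y * (\<integral>\<^sup>+ x. ?chord y x \<partial>lborel)"
      using AE_not_in[OF null_frontier(1)]
    proof eventually_elim
      fix y assume "y \<notin> frontier \<Omega>"
      have "AE x in lborel.
        (\<integral>\<^sup>+ r. F (y + r *\<^sub>R vhat v, x + r *\<^sub>R vhat v, r) \<partial>lborel) = indicator \<Omega> y * ?chord y x"
        using AE_not_in[OF null_frontier(1)] AE_not_in[OF null_frontier(2)]
        by eventually_elim
           (simp add: F_def nn_integral_shifted_D1_section[OF assms(1-3,5) \<open>y \<notin> frontier \<Omega>\<close>])
      then show "(\<integral>\<^sup>+ x. \<integral>\<^sup>+ r. F (y + r *\<^sub>R vhat v, x + r *\<^sub>R vhat v, r) \<partial>lborel \<partial>lborel)
        = indicator \<Omega> y * (\<integral>\<^sup>+ x. ?chord y x \<partial>lborel)"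
        by (cases "y \<in> \<Omega>") (simp_all add: nn_integral_cong_AE)
    qed
  qed
  finally show ?thesis .
qed

theorem mainTheorem18:
  fixes \<Omega> :: "(real^3) set"
    and h :: "(real^3) \<times> (real^3) \<times> (real^3) \<times> real \<Rightarrow> ennreal"
  assumes "open \<Omega>" and "convex \<Omega>" and "connected \<Omega>" and "bounded \<Omega>" and "\<Omega> \<noteq> {}"
    and "h \<in> borel_measurable borel"
  shows "(\<integral>\<^sup>+ v. (\<integral>\<^sup>+ y. (\<integral>\<^sup>+ x. indicator (D1 \<Omega>) (x, y, v) *
            (\<integral>\<^sup>+ r. indicator {norm (x - q_minus \<Omega> x v) .. norm (y - q_minus \<Omega> y v)} r *
               h (v, y, x, r) \<partial>lborel) \<partial>lborel) \<partial>lborel) \<partial>lborel)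
       = (\<integral>\<^sup>+ v'. (\<integral>\<^sup>+ y'. indicator \<Omega> y' * (\<integral>\<^sup>+ x'. indicator (Omega_vy \<Omega> v' y') x' *
            (\<integral>\<^sup>+ r'. indicator {norm (x' - q1 \<Omega> x' v') ..
                        min (norm (x' - q2 \<Omega> x' v')) (norm (y' - q_plus \<Omega> y' v'))} r' *
               h (v', y' + r' *\<^sub>R vhat v', x' + r' *\<^sub>R vhat v', r') \<partial>lborel)
            \<partial>lborel) \<partial>lborel) \<partial>lborel)"
  using AE_lborel_singleton[of 0]
  by (intro nn_integral_cong_AE) (auto elim!: eventually_mono intro: nn_integral_D1_direction[OF assms(1,2,4,6)])

end
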